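(* For every rooted graph $(F,R)$ and integer $\ell\ge 1$, every $K\in \mathcal{F}^\ell$ satisfies \[e(K)\ge \rho(F,R)\,(v(K)-|R|).\]
   Context: A rooted graph $(F,R)$ is a graph $F$ with a root set $R\subsetneq V(F)$. $\mathcal{F}^\ell$ is the set of all graphs obtained as the union of $\ell$ distinct labeled copies of $F$ which all agree on the root set $R$. For $S\subseteq V(F)$, $e_S(F)$ is the number of edges of $F$ incident to a vertex of $S$, and $\rho(F,R)=\min_{\emptyset\ne S\subseteq V(F)\setminus R} e_S(F)/|S|$. $e(K)$ and $v(K)$ denote the numbers of edges and vertices of $K$. *)

theory Defs
  imports Complex_Main
begin

definition graph :: "'a set \<Rightarrow> 'a set set \<Rightarrow> bool" where
  "graph V E \<longleftrightarrow> finite V \<and> (\<forall>e\<in>E. e \<subseteq> V \<and> card e = 2)"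

definition rooted_graph :: "'a set \<Rightarrow> 'a set set \<Rightarrow> 'a set \<Rightarrow> bool" where
  "rooted_graph V E R \<longleftrightarrow> graph V E \<and> R \<subset> V"

definition e_S :: "'a set set \<Rightarrow> 'a set \<Rightarrow> nat" where
  "e_S E S = card {e \<in> E. e \<inter> S \<noteq> {}}"

definition rho :: "'a set \<Rightarrow> 'a set set \<Rightarrow> 'a set \<Rightarrow> real" where
  "rho V E R = Min {real (e_S E S) / real (card S) | S. S \<noteq> {} \<and> S \<subseteq> V - R}"

text \<open>(VK,EK) belongs to F^l: it is the union of l distinct labeled copies of F
  (injective maps phi i, i < l, pairwise distinct on V(F)) which all agree on R.\<close>
definition in_F_ell ::
  "'a set \<Rightarrow> 'a set set \<Rightarrow> 'a set \<Rightarrow> nat \<Rightarrow> 'b set \<Rightarrow> 'b set set \<Rightarrow> bool" where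
  "in_F_ell V E R l VK EK \<longleftrightarrow>
     (\<exists>\<phi> :: nat \<Rightarrow> 'a \<Rightarrow> 'b.
        (\<forall>i<l. inj_on (\<phi> i) V) \<and>
        (\<forall>i<l. \<forall>j<l. \<forall>r\<in>R. \<phi> i r = \<phi> j r) \<and>
        (\<forall>i<l. \<forall>j<l. i \<noteq> j \<longrightarrow> (\<exists>v\<in>V. \<phi> i v \<noteq> \<phi> j v)) \<and>
        VK = (\<Union>i<l. \<phi> i ` V) \<and>
        EK = (\<Union>i<l. (\<lambda>e. \<phi> i ` e) ` E))"

end

theory Submission
  imports Defs
begin

text \<open>Build \<open>K\<close> by adding the copies of \<open>F\<close> one at a time, starting from the common image \<open>Q\<close>
  of the root set. When a copy \<open>\<phi>\<close> is added, the set \<open>S\<close> of vertices of \<open>F\<close> whose images are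
  new avoids \<open>R\<close> and contributes \<open>|S|\<close> new vertices; every edge of \<open>F\<close> meeting \<open>S\<close> is mapped to an
  edge containing a new vertex, hence to a new edge. So each step adds at least
  \<open>e\<^sub>S(F) \<ge> \<rho>(F,R) |S|\<close> edges, and summing over the steps gives the bound.
  The copies need not be distinct for this.\<close>

lemma graph_finite_edges:
  assumes "graph V E"
  shows "finite E"
proof -
  have "E \<subseteq> Pow V" using assms unfolding graph_def by blast
  then show ?thesis using assms unfolding graph_def by (meson finite_Pow_iff finite_subset)
qed

lemma rho_mul_card_le_e_S:
  assumes "finite V" and "S \<subseteq> V - R"
  shows "rho V E R * real (card S) \<le> real (e_S E S)"
proof (cases "S = {}")
  case False
  let ?ratios = "{real (e_S E S) / real (card S) | S. S \<noteq> {} \<and> S \<subseteq> V - R}"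
  have "?ratios \<subseteq> (\<lambda>S. real (e_S E S) / real (card S)) ` Pow V" by blast
  then have "finite ?ratios" using assms(1) finite_subset by blast
  then have "rho V E R \<le> real (e_S E S) / real (card S)"
    unfolding rho_def using False assms(2) by (intro Min_le) blast+
  moreover have "card S > 0"
    using False assms by (meson card_gt_0_iff finite_Diff finite_subset)
  ultimately show ?thesis by (simp add: pos_le_divide_eq)
qed simp

lemma card_Un_image_new_vertices:
  assumes "finite V" and "finite W" and "inj_on \<phi> V"
  shows "card (W \<union> \<phi> ` V) = card W + card {v \<in> V. \<phi> v \<notin> W}"
proof -
  let ?S = "{v \<in> V. \<phi> v \<notin> W}"
  have "W \<union> \<phi> ` V = W \<union> \<phi> ` ?S" by blast
  moreover have "card (W \<union> \<phi> ` ?S) = card W + card (\<phi> ` ?S)"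
    using assms by (intro card_Un_disjoint) auto
  moreover have "card (\<phi> ` ?S) = card ?S"
    using assms(3) by (intro card_image) (auto intro: inj_on_subset)
  ultimately show ?thesis by simp
qed

lemma card_Un_image_new_edges:
  assumes "graph V E" and "inj_on \<phi> V" and "finite D" and "\<forall>d\<in>D. d \<subseteq> W"
  shows "card D + e_S E {v \<in> V. \<phi> v \<notin> W} \<le> card (D \<union> (\<lambda>e. \<phi> ` e) ` E)"
proof -
  let ?S = "{v \<in> V. \<phi> v \<notin> W}"
  let ?new = "(\<lambda>e. \<phi> ` e) ` {e \<in> E. e \<inter> ?S \<noteq> {}}"
  have edges_in_V: "\<And>e. e \<in> E \<Longrightarrow> e \<subseteq> V" using assms(1) unfolding graph_def by blast
  have "inj_on (\<lambda>e. \<phi> ` e) E"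
    using inj_on_image_eq_iff[OF assms(2)] edges_in_V unfolding inj_on_def by metis
  then have card_new: "card ?new = e_S E ?S"
    unfolding e_S_def by (intro card_image) (auto intro: inj_on_subset)
  have "D \<inter> ?new = {}"
    using assms(4) by fastforce
  then have "card D + card ?new = card (D \<union> ?new)"
    using assms(3) graph_finite_edges[OF assms(1)] by (intro card_Un_disjoint[symmetric]) auto
  also have "\<dots> \<le> card (D \<union> (\<lambda>e. \<phi> ` e) ` E)"
    using assms(3) graph_finite_edges[OF assms(1)] by (intro card_mono) auto
  finally show ?thesis unfolding card_new .
qed

lemma rho_bound_add_copy:
  assumes "rooted_graph V E R" and "inj_on \<phi> V" and "\<phi> ` R \<subseteq> W"
    and "finite W" and "finite D" and "\<forall>d\<in>D. d \<subseteq> W"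
    and "rho V E R * (real (card W) - real (card R)) \<le> real (card D)"
  shows "rho V E R * (real (card (W \<union> \<phi> ` V)) - real (card R))
    \<le> real (card (D \<union> (\<lambda>e. \<phi> ` e) ` E))"
proof -
  let ?S = "{v \<in> V. \<phi> v \<notin> W}"
  have "graph V E" and "finite V" using assms(1) unfolding rooted_graph_def graph_def by auto
  have "?S \<subseteq> V - R" using assms(3) by blast
  then have "rho V E R * real (card ?S) \<le> real (e_S E ?S)"
    by (rule rho_mul_card_le_e_S[OF \<open>finite V\<close>])
  moreover have "card (W \<union> \<phi> ` V) = card W + card ?S"
    by (rule card_Un_image_new_vertices[OF \<open>finite V\<close> assms(4,2)])
  moreover have "card D + e_S E ?S \<le> card (D \<union> (\<lambda>e. \<phi> ` e) ` E)"
    by (rule card_Un_image_new_edges[OF \<open>graph V E\<close> assms(2,5,6)])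
  ultimately show ?thesis using assms(7) by (simp add: algebra_simps)
qed

lemma rho_bound_union_of_copies:
  fixes n :: nat
  assumes "rooted_graph V E R" and "finite Q" and "card Q = card R"
    and "\<And>i. i < n \<Longrightarrow> inj_on (\<phi> i) V" and "\<And>i. i < n \<Longrightarrow> \<phi> i ` R = Q"
  shows "rho V E R * (real (card (Q \<union> (\<Union>i<n. \<phi> i ` V))) - real (card R))
    \<le> real (card (\<Union>i<n. (\<lambda>e. \<phi> i ` e) ` E))"
  using assms(4,5)
proof (induction n)
  case (Suc n)
  let ?W = "Q \<union> (\<Union>i<n. \<phi> i ` V)" and ?D = "\<Union>i<n. (\<lambda>e. \<phi> i ` e) ` E"
  have "finite V" and "finite E" and "\<forall>e\<in>E. e \<subseteq> V"
    using assms(1) graph_finite_edges unfolding rooted_graph_def graph_def by auto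
  then have "finite ?W" and "finite ?D" and "\<forall>d\<in>?D. d \<subseteq> ?W"
    using assms(2) by auto
  moreover have "inj_on (\<phi> n) V" and "\<phi> n ` R \<subseteq> ?W" and
    "rho V E R * (real (card ?W) - real (card R)) \<le> real (card ?D)"
    using Suc by auto
  ultimately have "rho V E R * (real (card (?W \<union> \<phi> n ` V)) - real (card R))
      \<le> real (card (?D \<union> (\<lambda>e. \<phi> n ` e) ` E))"
    by (intro rho_bound_add_copy[OF assms(1)])
  moreover have "?W \<union> \<phi> n ` V = Q \<union> (\<Union>i<Suc n. \<phi> i ` V)"
    and "?D \<union> (\<lambda>e. \<phi> n ` e) ` E = (\<Union>i<Suc n. (\<lambda>e. \<phi> i ` e) ` E)"
    by (auto simp: lessThan_Suc)
  ultimately show ?case by simp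
qed (simp add: assms(3))

theorem lemma4p1:
  fixes V :: "'a set" and E :: "'a set set" and R :: "'a set"
    and l :: nat and VK :: "'b set" and EK :: "'b set set"
  assumes "rooted_graph V E R"
    and "l \<ge> 1"
    and "in_F_ell V E R l VK EK"
  shows "real (card EK) \<ge> rho V E R * (real (card VK) - real (card R))"
proof -
  obtain \<phi> :: "nat \<Rightarrow> 'a \<Rightarrow> 'b" where
    inj: "\<And>i. i < l \<Longrightarrow> inj_on (\<phi> i) V" and
    agree: "\<And>i j r. i < l \<Longrightarrow> j < l \<Longrightarrow> r \<in> R \<Longrightarrow> \<phi> i r = \<phi> j r" and
    VK: "VK = (\<Union>i<l. \<phi> i ` V)" and
    EK: "EK = (\<Union>i<l. (\<lambda>e. \<phi> i ` e) ` E)"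
    using assms(3) unfolding in_F_ell_def by blast
  have "0 < l" and "R \<subseteq> V" and "finite R"
    using assms(1,2) unfolding rooted_graph_def graph_def by (auto intro: finite_subset)
  have "finite (\<phi> 0 ` R)" using \<open>finite R\<close> by simp
  moreover have "card (\<phi> 0 ` R) = card R"
    using inj[OF \<open>0 < l\<close>] \<open>R \<subseteq> V\<close> by (intro card_image) (rule inj_on_subset)
  moreover have "\<phi> i ` R = \<phi> 0 ` R" if "i < l" for i
    by (rule image_cong) (simp_all add: agree[OF that \<open>0 < l\<close>])
  ultimately have "rho V E R * (real (card (\<phi> 0 ` R \<union> VK)) - real (card R)) \<le> real (card EK)"
    unfolding VK EK by (intro rho_bound_union_of_copies[OF assms(1)] inj)
  moreover have "\<phi> 0 ` R \<union> VK = VK"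
    unfolding VK using \<open>0 < l\<close> \<open>R \<subseteq> V\<close> by blast
  ultimately show ?thesis by simp
qed

end
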